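(* Assume (L1) and (L2) hold. Then $\Phi(nT,0)$ is strongly positive for every integer $n>m$: for all $u_0\in[C(\bar\Omega)]^m$ with $u_0>0$ (i.e. $u_0\ge0$, $u_0\not\equiv0$) and all $n>m$, $\Phi(nT,0)u_0\gg0$ in $\bar\Omega$.
   Context: $\Omega\subset\mathbb R^N$ bounded with smooth boundary, $T>0$, $m\ge1$, $\mathbb S=\{1,\dots,m\}$, $Q_T=\bar\Omega\times(0,T]$; $u\gg0$ means all components positive. For each $i$, $d_i>0$, $J_i:\mathbb R^{2N}\to[0,\infty)$ continuous with $J_i(x,x)>0$, $\int_{\mathbb R^N}J_i(x,y)dy=1$. $\ell_{ik}\in C(\bar Q_T)$ are $T$-periodic in $t$ (extended periodically). (L1): $\ell_{ik}\ge0$ for $i\ne k$. (L2): the matrix of averages $\bar\ell_{ik}=\frac1{|\Omega|T}\int_0^T\int_\Omega\ell_{ik}\,dx\,dt$ is irreducible (no split of $\mathbb S$ into disjoint nonempty $I,K$ with $\bar\ell_{ik}=0$ for all $i\in I$, $k\in K$). $\Phi(t,s)v_0=v(\cdot,t)$ where $v$ solves $\partial_tv_i=d_i\int_\Omega J_i(x,y)v_i(y,t)dy+\sum_{k=1}^m\ell_{ik}(x,t)v_k$, $x\in\bar\Omega$, $t>s$, $v(\cdot,s)=v_0\in[C(\bar\Omega)]^m$. *)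

theory Defs
  imports "HOL-Analysis.Analysis"
begin

definition avg_coeff :: "(real^'n::finite) set \<Rightarrow> real \<Rightarrow> (real^'n \<Rightarrow> real \<Rightarrow> real) \<Rightarrow> real" where
  "avg_coeff \<Omega> T f =
     integral (\<Omega> \<times> {0..T}) (\<lambda>(x, t). f x t) / (measure lebesgue \<Omega> * T)"

definition irreducible_mat :: "nat \<Rightarrow> (nat \<Rightarrow> nat \<Rightarrow> real) \<Rightarrow> bool" where
  "irreducible_mat m A \<longleftrightarrow>
     \<not> (\<exists>I K. I \<noteq> {} \<and> K \<noteq> {} \<and> I \<inter> K = {} \<and> I \<union> K = {1..m} \<and>
            (\<forall>i\<in>I. \<forall>k\<in>K. A i k = 0))"

definition is_solution ::
  "(real^'n::finite) set \<Rightarrow> nat \<Rightarrow> (nat \<Rightarrow> real) \<Rightarrow> (nat \<Rightarrow> real^'n \<Rightarrow> real^'n \<Rightarrow> real)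
   \<Rightarrow> (nat \<Rightarrow> nat \<Rightarrow> real^'n \<Rightarrow> real \<Rightarrow> real) \<Rightarrow> real
   \<Rightarrow> (nat \<Rightarrow> real^'n \<Rightarrow> real) \<Rightarrow> (nat \<Rightarrow> real^'n \<Rightarrow> real \<Rightarrow> real) \<Rightarrow> bool" where
  "is_solution \<Omega> m d J l s v0 v \<longleftrightarrow>
     (\<forall>i\<in>{1..m}.
        continuous_on (closure \<Omega> \<times> {s..}) (\<lambda>(x, t). v i x t) \<and>
        (\<forall>x\<in>closure \<Omega>. v i x s = v0 i x) \<and>
        (\<forall>x\<in>closure \<Omega>. \<forall>t. t > s \<longrightarrow>
           ((\<lambda>\<tau>. v i x \<tau>) has_real_derivative
              (d i * integral \<Omega> (\<lambda>y. J i x y * v i y t)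
               + (\<Sum>k=1..m. l i k x t * v k x t))) (at t)))"

end

theory Submission
  imports Defs "HOL-Library.Periodic_Fun"
begin

(*
  Comparing v with the barrier -eps e^(K t) at the first time some component could reach it shows
  that the solution stays nonnegative. The weight e^(L t) absorbs the diagonal coefficient l_ii,
  so e^(L t) v_i is nondecreasing and becomes strictly positive once the forcing of species i
  (its dispersal integral plus the couplings l_ik v_k, k ~= i) is positive at some earlier time.
  As J_i is positive near the diagonal, positivity of v_i at a single point spreads over the
  connected domain. Hence the set of species that are positive on all of the closure at time t
  grows with t and is nonempty for t > 0. If it is a proper subset, irreducibility of the averaged
  matrix gives a missing species i and a present one k with l_ik positive somewhere, and by
  periodicity also within the next period, so i joins the set within one period. After m - 1
  periods every species is positive.
*)

lemma integrable_on_if_continuous_on_closure: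
  fixes f :: "'a::euclidean_space \<Rightarrow> real"
  assumes S: "S \<in> lmeasurable" "bounded S" and f: "continuous_on (closure S) f"
  shows "f integrable_on S"
proof -
  obtain B where B: "\<And>x. x \<in> closure S \<Longrightarrow> norm (f x) \<le> B"
    using compact_continuous_image[OF f] compact_closure S(2)
    by (metis compact_imp_bounded bounded_iff imageI)
  have "f absolutely_integrable_on S"
  proof (rule measurable_bounded_by_integrable_imp_absolutely_integrable)
    show "f \<in> borel_measurable (lebesgue_on S)"
      using continuous_imp_measurable_on_sets_lebesgue continuous_on_subset[OF f closure_subset]
        S(1)
      by blast
    show "(\<lambda>_. B) integrable_on S" using integrable_on_const[OF S(1)] .
  qed (use B closure_subset S(1) in auto)
  then show ?thesis by (simp add: absolutely_integrable_on_def)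
qed

lemma integral_pos_if_pos_at_interior_point:
  fixes f :: "'a::euclidean_space \<Rightarrow> real"
  assumes S: "open S" "bounded S" and f: "continuous_on (closure S) f"
    and nonneg: "\<And>y. y \<in> S \<Longrightarrow> f y \<ge> 0" and y0: "y0 \<in> S" "f y0 > 0"
  shows "integral S f > 0"
proof -
  have "isCont f y0"
    using continuous_on_subset[OF f closure_subset] S(1) y0(1) continuous_on_eq_continuous_at
    by blast
  then obtain e1 where e1: "e1 > 0" "\<And>y. dist y y0 < e1 \<Longrightarrow> dist (f y) (f y0) < f y0 / 2"
    using y0(2) unfolding continuous_at_eps_delta by (metis half_gt_zero)
  obtain e2 where e2: "e2 > 0" "ball y0 e2 \<subseteq> S" using S(1) y0(1) open_contains_ball by blast
  define B where "B = ball y0 (min e1 e2)"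
  have B: "B \<subseteq> S" "B \<in> lmeasurable" using e2 by (auto simp: B_def)
  have half_below: "f y0 / 2 \<le> f y" if "y \<in> B" for y
  proof -
    have "dist (f y) (f y0) < f y0 / 2"
      using e1(2)[of y] that by (simp add: B_def dist_commute)
    then show ?thesis unfolding dist_real_def by arith
  qed
  have int_S: "f integrable_on S"
    using integrable_on_if_continuous_on_closure[OF lmeasurable_open[OF S(2,1)] S(2) f] .
  have int_B: "f integrable_on B"
    using integrable_on_if_continuous_on_closure[OF B(2) bounded_subset[OF S(2) B(1)]]
      continuous_on_subset[OF f closure_mono[OF B(1)]] .
  have "0 < f y0 / 2 * measure lebesgue B"
    using y0(2) e1(1) e2(1) by (simp add: B_def)
  also have "\<dots> = integral B (\<lambda>_. f y0 / 2)"
    using lmeasure_integral[OF B(2)] integral_mult_right[of B "f y0 / 2" "\<lambda>_. 1"] by simp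
  also have "\<dots> \<le> integral B f"
    using integral_le integrable_on_const[OF B(2)] int_B half_below by blast
  also have "\<dots> \<le> integral S f"
    using integral_subset_le[OF B(1) int_B int_S] nonneg by blast
  finally show ?thesis .
qed

lemma continuous_pos_near_diagonal:
  fixes K :: "'a::metric_space \<Rightarrow> 'a \<Rightarrow> real"
  assumes K: "continuous_on UNIV (\<lambda>(x, y). K x y)" and pos: "K w w > 0"
  obtains e where "e > 0" "\<And>x y. dist x w < e \<Longrightarrow> dist y w < e \<Longrightarrow> K x y > 0"
proof -
  define U where "U = {p. 0 < (\<lambda>(x, y). K x y) p}"
  have "open U" unfolding U_def by (rule open_Collect_less[OF continuous_on_const K])
  moreover have "(w, w) \<in> U" using pos by (simp add: U_def)
  ultimately obtain A B where AB: "open A" "open B" "(w, w) \<in> A \<times> B" "A \<times> B \<subseteq> U"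
    by (rule open_prod_elim)
  then have "open (A \<inter> B)" "w \<in> A \<inter> B" by auto
  then obtain e where e: "e > 0" "ball w e \<subseteq> A \<inter> B"
    using open_contains_ball_eq by blast
  show ?thesis
  proof (rule that[OF e(1)])
    fix x y assume "dist x w < e" "dist y w < e"
    then have "(x, y) \<in> A \<times> B" using e(2) by (auto simp: dist_commute)
    then show "K x y > 0" using AB(4) by (auto simp: U_def)
  qed
qed

lemma compact_nonpositive_times:
  fixes g :: "'i \<Rightarrow> 'a::metric_space \<Rightarrow> real \<Rightarrow> real"
  assumes I: "finite I" and C: "compact C"
    and cont: "\<And>i. i \<in> I \<Longrightarrow> continuous_on (C \<times> {0..b}) (\<lambda>(x, t). g i x t)"
  shows "compact {t \<in> {0..b}. \<exists>i\<in>I. \<exists>x\<in>C. g i x t \<le> 0}"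
proof -
  have "{t \<in> {0..b}. \<exists>i\<in>I. \<exists>x\<in>C. g i x t \<le> 0}
      = (\<Union>i\<in>I. snd ` {p \<in> C \<times> {0..b}. (\<lambda>(x, t). g i x t) p \<le> 0})"
    by (auto simp: image_iff; blast)
  also have "compact \<dots>"
  proof (intro compact_UN I compact_continuous_image continuous_intros)
    fix i assume "i \<in> I"
    then have "closed {p \<in> C \<times> {0..b}. (\<lambda>(x, t). g i x t) p \<le> 0}"
      using cont C by (intro continuous_on_closed_Collect_le closed_Times compact_imp_closed) auto
    then have "compact (C \<times> {0..b} \<inter> {p \<in> C \<times> {0..b}. (\<lambda>(x, t). g i x t) p \<le> 0})"
      using compact_Int_closed compact_Times[OF C compact_Icc] by blast
    then show "compact {p \<in> C \<times> {0..b}. (\<lambda>(x, t). g i x t) p \<le> 0}"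
      by (simp only: Int_absorb1[OF Collect_subset])
  qed
  finally show ?thesis .
qed

lemma first_zero_time:
  fixes g :: "'i \<Rightarrow> 'a::metric_space \<Rightarrow> real \<Rightarrow> real"
  assumes I: "finite I" and C: "compact C"
    and cont: "\<And>i. i \<in> I \<Longrightarrow> continuous_on (C \<times> {0..b}) (\<lambda>(x, t). g i x t)"
    and init: "\<And>i x. i \<in> I \<Longrightarrow> x \<in> C \<Longrightarrow> g i x 0 > 0"
    and bad: "i0 \<in> I" "x0 \<in> C" "t0 \<in> {0..b}" "g i0 x0 t0 \<le> 0"
  obtains i x ts where "i \<in> I" "x \<in> C" "0 < ts" "ts \<le> b" "g i x ts = 0"
    "\<And>j y. j \<in> I \<Longrightarrow> y \<in> C \<Longrightarrow> g j y ts \<ge> 0"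
    "\<And>j y s. j \<in> I \<Longrightarrow> y \<in> C \<Longrightarrow> 0 \<le> s \<Longrightarrow> s < ts \<Longrightarrow> g j y s > 0"
proof -
  define bad_times where "bad_times = {t \<in> {0..b}. \<exists>i\<in>I. \<exists>x\<in>C. g i x t \<le> 0}"
  have "compact bad_times" unfolding bad_times_def by (rule compact_nonpositive_times[OF I C cont])
  moreover have "t0 \<in> bad_times"
    using bad unfolding bad_times_def by blast
  ultimately have "\<exists>ts\<in>bad_times. \<forall>t\<in>bad_times. ts \<le> t"
    by (intro compact_attains_inf) auto
  then obtain ts where "ts \<in> bad_times" and ts_min: "\<And>t. t \<in> bad_times \<Longrightarrow> ts \<le> t"
    by blast
  then obtain i x where i: "i \<in> I" and x: "x \<in> C" and ts: "0 \<le> ts" "ts \<le> b" and "g i x ts \<le> 0"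
    unfolding bad_times_def by auto
  have before: "g j y s > 0" if "j \<in> I" "y \<in> C" "0 \<le> s" "s < ts" for j y s
  proof (rule ccontr)
    assume "\<not> g j y s > 0"
    then have "s \<in> bad_times" using that ts unfolding bad_times_def by (auto simp: not_less)
    then show False using ts_min[of s] that(4) by simp
  qed
  have "ts \<noteq> 0" using init[OF i x] \<open>g i x ts \<le> 0\<close> by auto
  then have ts_pos: "0 < ts" using ts by simp
  have at_ts: "g j y ts \<ge> 0" if j: "j \<in> I" and y: "y \<in> C" for j y
  proof (rule continuous_ge_on_closure[where S="{0..<ts}" and f="g j y" and x=ts and a=0])
    show "continuous_on (closure {0..<ts}) (g j y)"
      using continuous_on_compose_Pair[OF cont[OF j], of "{0..ts}" "\<lambda>_. y" "\<lambda>s. s"] y ts ts_pos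
      by simp
  qed (use ts_pos less_imp_le[OF before[OF j y]] in auto)
  have "g i x ts = 0" using at_ts[OF i x] \<open>g i x ts \<le> 0\<close> by linarith
  show ?thesis by (rule that[OF i x ts_pos ts(2) \<open>g i x ts = 0\<close> at_ts before])
qed

lemma deriv_nonpos_at_first_zero:
  fixes f :: "real \<Rightarrow> real"
  assumes deriv: "(f has_real_derivative D) (at ts)" and a: "a < ts" and zero: "f ts = 0"
    and before: "\<And>s. a < s \<Longrightarrow> s < ts \<Longrightarrow> f s > 0"
  shows "D \<le> 0"
proof (rule ccontr)
  assume "\<not> D \<le> 0"
  then obtain \<delta> where \<delta>: "\<delta> > 0" "\<And>h. 0 < h \<Longrightarrow> h < \<delta> \<Longrightarrow> f (ts - h) < f ts"
    using DERIV_pos_inc_left[OF deriv] by (meson not_le)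
  define h where "h = min (\<delta> / 2) ((ts - a) / 2)"
  have h: "0 < h" "h < \<delta>" "a < ts - h" using \<delta>(1) a by (auto simp: h_def min_def field_simps)
  show False using \<delta>(2)[OF h(1,2)] before[OF h(3)] h(1) zero by simp
qed

lemma avg_coeff_nonzero_obtains_point:
  assumes "avg_coeff \<Omega> T f \<noteq> 0"
  obtains x \<tau> where "x \<in> \<Omega>" "\<tau> \<in> {0..T}" "f x \<tau> \<noteq> 0"
proof (rule ccontr)
  assume "\<not> thesis"
  then have "\<And>p. p \<in> \<Omega> \<times> {0..T} \<Longrightarrow> (\<lambda>(x, t). f x t) p = 0" using that by fastforce
  then have "integral (\<Omega> \<times> {0..T}) (\<lambda>(x, t). f x t) = integral (\<Omega> \<times> {0..T}) (\<lambda>_. 0 :: real)"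
    by (rule integral_cong)
  then show False using assms by (simp add: avg_coeff_def)
qed

lemma irreducible_mat_crossing:
  assumes A: "irreducible_mat m A" and P: "P \<subseteq> {1..m}" "P \<noteq> {}" "P \<noteq> {1..m}"
  obtains i k where "i \<in> {1..m} - P" "k \<in> P" "A i k \<noteq> 0"
proof -
  have "\<not> (\<forall>i\<in>{1..m} - P. \<forall>k\<in>P. A i k = 0)"
  proof
    assume "\<forall>i\<in>{1..m} - P. \<forall>k\<in>P. A i k = 0"
    with P have "\<exists>I K. I \<noteq> {} \<and> K \<noteq> {} \<and> I \<inter> K = {} \<and> I \<union> K = {1..m} \<and> (\<forall>i\<in>I. \<forall>k\<in>K. A i k = 0)"
      by (intro exI[of _ "{1..m} - P"] exI[of _ P]) blast
    with A show False unfolding irreducible_mat_def by blast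
  qed
  then show ?thesis using that by blast
qed

lemma period_shift_into_interval:
  fixes T \<tau> t0 :: real
  assumes T: "T > 0"
  obtains j :: int where "t0 < \<tau> + of_int j * T" "\<tau> + of_int j * T \<le> t0 + T"
proof
  define q where "q = (t0 - \<tau>) / T"
  have "q < of_int (\<lfloor>q\<rfloor> + 1)" "of_int (\<lfloor>q\<rfloor> + 1) \<le> q + 1" by linarith+
  then have "q * T < of_int (\<lfloor>q\<rfloor> + 1) * T" "of_int (\<lfloor>q\<rfloor> + 1) * T \<le> (q + 1) * T"
    using T by (auto intro: mult_strict_right_mono mult_right_mono)
  moreover have "q * T = t0 - \<tau>" using T by (simp add: q_def)
  ultimately have "t0 - \<tau> < of_int (\<lfloor>q\<rfloor> + 1) * T" "of_int (\<lfloor>q\<rfloor> + 1) * T \<le> t0 - \<tau> + T"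
    by (simp_all add: algebra_simps)
  then show "t0 < \<tau> + of_int (\<lfloor>q\<rfloor> + 1) * T" "\<tau> + of_int (\<lfloor>q\<rfloor> + 1) * T \<le> t0 + T"
    by linarith+
qed

locale coop_nonlocal_system =
  fixes \<Omega> :: "(real^'n) set"
    and m :: nat
    and d :: "nat \<Rightarrow> real"
    and J :: "nat \<Rightarrow> real^'n \<Rightarrow> real^'n \<Rightarrow> real"
    and l :: "nat \<Rightarrow> nat \<Rightarrow> real^'n \<Rightarrow> real \<Rightarrow> real"
    and u0 :: "nat \<Rightarrow> real^'n \<Rightarrow> real"
    and v :: "nat \<Rightarrow> real^'n \<Rightarrow> real \<Rightarrow> real"
  assumes open_domain: "open \<Omega>" and bounded_domain: "bounded \<Omega>"
    and d_pos: "\<And>i. i \<in> {1..m} \<Longrightarrow> d i > 0"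
    and J_cont: "\<And>i. i \<in> {1..m} \<Longrightarrow> continuous_on UNIV (\<lambda>(x, y). J i x y)"
    and J_nonneg: "\<And>i x y. i \<in> {1..m} \<Longrightarrow> J i x y \<ge> 0"
    and J_int: "\<And>i x. i \<in> {1..m} \<Longrightarrow> (J i x has_integral 1) UNIV"
    and l_cont: "\<And>i k. i \<in> {1..m} \<Longrightarrow> k \<in> {1..m} \<Longrightarrow>
                   continuous_on (closure \<Omega> \<times> UNIV) (\<lambda>(x, t). l i k x t)"
    and cooperative: "\<And>i k x t. i \<in> {1..m} \<Longrightarrow> k \<in> {1..m} \<Longrightarrow> i \<noteq> k \<Longrightarrow>
                   x \<in> closure \<Omega> \<Longrightarrow> l i k x t \<ge> 0"
    and u0_nonneg: "\<And>i x. i \<in> {1..m} \<Longrightarrow> x \<in> closure \<Omega> \<Longrightarrow> u0 i x \<ge> 0"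
    and solution: "is_solution \<Omega> m d J l 0 u0 v"
begin

lemma v_continuous: "i \<in> {1..m} \<Longrightarrow> continuous_on (closure \<Omega> \<times> {0..}) (\<lambda>(x, t). v i x t)"
  using solution by (simp add: is_solution_def)

lemma v_initial: "i \<in> {1..m} \<Longrightarrow> x \<in> closure \<Omega> \<Longrightarrow> v i x 0 = u0 i x"
  using solution by (simp add: is_solution_def)

lemma v_has_derivative:
  "i \<in> {1..m} \<Longrightarrow> x \<in> closure \<Omega> \<Longrightarrow> t > 0 \<Longrightarrow>
   ((\<lambda>\<tau>. v i x \<tau>) has_real_derivative
       (d i * integral \<Omega> (\<lambda>y. J i x y * v i y t) + (\<Sum>k=1..m. l i k x t * v k x t))) (at t)"
  using solution by (simp add: is_solution_def)

lemma v_continuous_in_time: "i \<in> {1..m} \<Longrightarrow> x \<in> closure \<Omega> \<Longrightarrow> continuous_on {0..} (v i x)"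
  by (rule continuous_on_compose_Pair[OF v_continuous]) (auto intro: continuous_intros)

lemma v_continuous_in_space: "i \<in> {1..m} \<Longrightarrow> t \<ge> 0 \<Longrightarrow> continuous_on (closure \<Omega>) (\<lambda>y. v i y t)"
  by (rule continuous_on_compose_Pair[OF v_continuous]) (auto intro: continuous_intros)

lemma J_continuous_in_space: "i \<in> {1..m} \<Longrightarrow> continuous_on S (J i x)"
  by (rule continuous_on_compose_Pair[OF J_cont[unfolded UNIV_Times_UNIV[symmetric]]])
    (auto intro: continuous_intros)

lemma dispersal_integrable:
  assumes "i \<in> {1..m}" "t \<ge> 0"
  shows "(\<lambda>y. J i x y * v i y t) integrable_on \<Omega>"
proof -
  have "continuous_on (closure \<Omega>) (\<lambda>y. J i x y * v i y t)"
    using assms by (intro continuous_on_mult J_continuous_in_space v_continuous_in_space)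
  then show ?thesis
    by (rule integrable_on_if_continuous_on_closure[OF lmeasurable_open[OF bounded_domain open_domain]
          bounded_domain])
qed

lemma J_integrable_on_domain: "i \<in> {1..m} \<Longrightarrow> J i x integrable_on \<Omega>"
  by (rule integrable_on_if_continuous_on_closure[OF lmeasurable_open[OF bounded_domain open_domain]
        bounded_domain J_continuous_in_space])

lemma integral_J_le_1:
  assumes i: "i \<in> {1..m}"
  shows "integral \<Omega> (J i x) \<le> 1"
proof -
  have "integral \<Omega> (J i x) \<le> integral UNIV (J i x)"
    by (rule integral_subset_le[OF subset_UNIV J_integrable_on_domain[OF i]
          has_integral_integrable[OF J_int[OF i]]]) (simp add: J_nonneg[OF i])
  also have "\<dots> = 1" using integral_unique[OF J_int[OF i]] .
  finally show ?thesis .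
qed

lemma l_bounded:
  obtains L where
    "\<And>i k x t. i \<in> {1..m} \<Longrightarrow> k \<in> {1..m} \<Longrightarrow> x \<in> closure \<Omega> \<Longrightarrow> t \<in> {0..b} \<Longrightarrow>
       \<bar>l i k x t\<bar> \<le> L"
proof -
  define S where "S p = (\<Sum>i=1..m. \<Sum>k=1..m. \<bar>(\<lambda>(x, t). l i k x t) p\<bar>)" for p
  have sub: "closure \<Omega> \<times> {0..b} \<subseteq> closure \<Omega> \<times> UNIV" by auto
  have "continuous_on (closure \<Omega> \<times> {0..b}) (\<lambda>p. \<bar>(\<lambda>(x, t). l i k x t) p\<bar>)"
    if "i \<in> {1..m}" "k \<in> {1..m}" for i k
    using continuous_on_subset[OF l_cont[OF that] sub] by (rule continuous_on_rabs)
  then have "continuous_on (closure \<Omega> \<times> {0..b}) S"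
    unfolding S_def by (intro continuous_on_sum) auto
  moreover have "compact (closure \<Omega> \<times> {0..b})"
    using bounded_domain by (simp add: compact_Times)
  ultimately have "bounded (S ` (closure \<Omega> \<times> {0..b}))"
    by (intro compact_imp_bounded compact_continuous_image)
  then obtain B where B: "\<And>p. p \<in> closure \<Omega> \<times> {0..b} \<Longrightarrow> \<bar>S p\<bar> \<le> B"
    unfolding bounded_iff by fastforce
  show ?thesis
  proof (rule that[of B])
    fix i k x t assume ik: "i \<in> {1..m}" "k \<in> {1..m}" and xt: "x \<in> closure \<Omega>" "t \<in> {0..b}"
    have "\<bar>l i k x t\<bar> \<le> (\<Sum>k=1..m. \<bar>l i k x t\<bar>)"
      using ik by (intro member_le_sum) auto
    also have "\<dots> \<le> (\<Sum>i'=1..m. \<Sum>k=1..m. \<bar>l i' k x t\<bar>)"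
      by (rule member_le_sum[of i "{1..m}" "\<lambda>i'. \<Sum>k=1..m. \<bar>l i' k x t\<bar>"])
        (use ik in \<open>auto intro: sum_nonneg\<close>)
    also have "\<dots> = S (x, t)" by (simp add: S_def)
    also have "\<dots> \<le> B" using B[of "(x, t)"] xt by auto
    finally show "\<bar>l i k x t\<bar> \<le> B" .
  qed
qed

lemma dispersal_lower_bound:
  assumes i: "i \<in> {1..m}" and t: "t \<ge> 0" and c: "c \<ge> 0"
    and above: "\<And>y. y \<in> closure \<Omega> \<Longrightarrow> v i y t \<ge> - c"
  shows "integral \<Omega> (\<lambda>y. J i x y * v i y t) \<ge> - c"
proof -
  have "integral \<Omega> (\<lambda>y. - c * J i x y) \<le> integral \<Omega> (\<lambda>y. J i x y * v i y t)"
  proof (rule integral_le)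
    show "(\<lambda>y. - c * J i x y) integrable_on \<Omega>"
      using integrable_cmul[OF J_integrable_on_domain[OF i], of "- c"] by simp
    show "(\<lambda>y. J i x y * v i y t) integrable_on \<Omega>" using dispersal_integrable[OF i t] .
    show "- c * J i x y \<le> J i x y * v i y t" if "y \<in> \<Omega>" for y
    proof -
      have "- c \<le> v i y t" using above that closure_subset by blast
      from mult_left_mono[OF this J_nonneg[OF i, of x y]] show ?thesis by (simp add: algebra_simps)
    qed
  qed
  moreover have "integral \<Omega> (\<lambda>y. - c * J i x y) = - c * integral \<Omega> (J i x)"
    by (rule integral_mult_right)
  moreover have "c * integral \<Omega> (J i x) \<le> c"
    using mult_left_le[OF integral_J_le_1[OF i] c] .
  ultimately show ?thesis by linarith
qed

lemma reaction_lower_bound: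
  assumes i: "i \<in> {1..m}" and x: "x \<in> closure \<Omega>" and t: "t \<ge> 0" and c: "c \<ge> 0"
    and L: "\<And>k. k \<in> {1..m} \<Longrightarrow> \<bar>l i k x t\<bar> \<le> L"
    and above: "\<And>k y. k \<in> {1..m} \<Longrightarrow> y \<in> closure \<Omega> \<Longrightarrow> v k y t \<ge> - c"
    and at_min: "v i x t = - c"
  shows "d i * integral \<Omega> (\<lambda>y. J i x y * v i y t) + (\<Sum>k=1..m. l i k x t * v k x t)
           \<ge> - ((d i + real m * L) * c)"
proof -
  have dispersal: "d i * (- c) \<le> d i * integral \<Omega> (\<lambda>y. J i x y * v i y t)"
    using d_pos[OF i] dispersal_lower_bound[OF i t c above[OF i]] by (intro mult_left_mono) auto
  have "- (L * c) \<le> l i k x t * v k x t" if k: "k \<in> {1..m}" for k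
  proof -
    have lL: "l i k x t * c \<le> L * c"
      using L[OF k] c by (intro mult_right_mono) (auto simp: abs_le_iff)
    show ?thesis
    proof (cases "k = i")
      case True
      then show ?thesis using lL at_min by simp
    next
      case False
      then have "0 \<le> l i k x t" using cooperative[OF i k _ x] by auto
      then have "l i k x t * (- c) \<le> l i k x t * v k x t"
        using above[OF k x] by (intro mult_left_mono)
      then show ?thesis using lL by simp
    qed
  qed
  then have "(\<Sum>k=1..m. - (L * c)) \<le> (\<Sum>k=1..m. l i k x t * v k x t)" by (rule sum_mono)
  then have coupling: "- (real m * (L * c)) \<le> (\<Sum>k=1..m. l i k x t * v k x t)" by simp
  have "- ((d i + real m * L) * c) = d i * (- c) - real m * (L * c)" by (simp add: algebra_simps)
  with dispersal coupling show ?thesis by linarith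
qed

lemma reaction_plus_barrier_pos:
  assumes i: "i \<in> {1..m}" and x: "x \<in> closure \<Omega>" and t: "t \<ge> 0" and c: "c > 0"
    and L: "\<And>k. k \<in> {1..m} \<Longrightarrow> \<bar>l i k x t\<bar> \<le> L"
    and above: "\<And>k y. k \<in> {1..m} \<Longrightarrow> y \<in> closure \<Omega> \<Longrightarrow> v k y t \<ge> - c"
    and at_min: "v i x t = - c"
    and K: "d i + real m * L < K"
  shows "d i * integral \<Omega> (\<lambda>y. J i x y * v i y t) + (\<Sum>k=1..m. l i k x t * v k x t) + c * K > 0"
proof -
  have "c * (d i + real m * L) < c * K" using mult_strict_left_mono[OF K c] .
  moreover have "c * (d i + real m * L) = (d i + real m * L) * c" by simp
  ultimately show ?thesis
    using reaction_lower_bound[OF i x t less_imp_le[OF c] L above at_min] by linarith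
qed

lemma v_nonneg:
  assumes i: "i \<in> {1..m}" and x: "x \<in> closure \<Omega>" and t: "t \<ge> 0"
  shows "v i x t \<ge> 0"
proof (rule ccontr)
  assume neg: "\<not> v i x t \<ge> 0"
  obtain L where L: "\<And>i k x s. i \<in> {1..m} \<Longrightarrow> k \<in> {1..m} \<Longrightarrow> x \<in> closure \<Omega> \<Longrightarrow>
      s \<in> {0..t} \<Longrightarrow> \<bar>l i k x s\<bar> \<le> L"
    using l_bounded[where b=t] by blast
  define K where "K = sum d {1..m} + real m * L + 1"
  define \<epsilon> where "\<epsilon> = - v i x t / (2 * exp (K * t))"
  define g where "g j y s = v j y s + \<epsilon> * exp (K * s)" for j y s
  have \<epsilon>: "\<epsilon> > 0" unfolding \<epsilon>_def using neg by (intro divide_pos_pos) auto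
  have "\<epsilon> * exp (K * t) = - v i x t / 2" by (simp add: \<epsilon>_def)
  then have g_neg: "g i x t \<le> 0" using neg by (simp add: g_def)
  have g_cont: "continuous_on (closure \<Omega> \<times> {0..t}) (\<lambda>(y, s). g j y s)" if "j \<in> {1..m}" for j
  proof -
    have "continuous_on (closure \<Omega> \<times> {0..t}) (\<lambda>p. v j (fst p) (snd p))"
      by (rule continuous_on_subset[OF v_continuous[OF that, unfolded split_beta]]) auto
    then show ?thesis
      unfolding g_def split_beta by (rule continuous_on_add) (intro continuous_intros)
  qed
  have g_init: "g j y 0 > 0" if "j \<in> {1..m}" "y \<in> closure \<Omega>" for j y
    using u0_nonneg[OF that] v_initial[OF that] \<epsilon> by (simp add: g_def)
  have "t \<in> {0..t}" using t by simp
  obtain j y ts where j: "j \<in> {1..m}" and y: "y \<in> closure \<Omega>"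
    and ts: "0 < ts" "ts \<le> t" and zero: "g j y ts = 0"
    and at_ts: "\<And>k z. k \<in> {1..m} \<Longrightarrow> z \<in> closure \<Omega> \<Longrightarrow> g k z ts \<ge> 0"
    and before: "\<And>k z s. k \<in> {1..m} \<Longrightarrow> z \<in> closure \<Omega> \<Longrightarrow> 0 \<le> s \<Longrightarrow> s < ts \<Longrightarrow>
                   g k z s > 0"
    by (rule first_zero_time[where I="{1..m}" and C="closure \<Omega>" and b=t and g=g,
          OF finite_atLeastAtMost compact_closure[THEN iffD2, OF bounded_domain]
          g_cont g_init i x \<open>t \<in> {0..t}\<close> g_neg])
      (assumption | rule that)+
  define c where "c = \<epsilon> * exp (K * ts)"
  define D where "D = d j * integral \<Omega> (\<lambda>z. J j y z * v j z ts) + (\<Sum>k=1..m. l j k y ts * v k y ts)"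
  have c: "c > 0" using \<epsilon> by (simp add: c_def)
  have above: "v k z ts \<ge> - c" if "k \<in> {1..m}" "z \<in> closure \<Omega>" for k z
    using at_ts[OF that] by (simp add: g_def c_def)
  have at_min: "v j y ts = - c" using zero by (simp add: g_def c_def)
  have Lj: "\<bar>l j k y ts\<bar> \<le> L" if "k \<in> {1..m}" for k using L[OF j that y] ts by simp
  have "d j \<le> sum d {1..m}" by (rule member_le_sum[OF j]) (auto intro!: less_imp_le[OF d_pos])
  then have "d j + real m * L < K" by (simp add: K_def)
  then have D_pos: "D + c * K > 0"
    unfolding D_def using reaction_plus_barrier_pos[OF j y _ c Lj above at_min] ts by simp
  have "((\<lambda>s. \<epsilon> * exp (K * s)) has_real_derivative c * K) (at ts)"
    unfolding c_def by (auto intro!: derivative_eq_intros)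
  then have "((\<lambda>s. g j y s) has_real_derivative D + c * K) (at ts)"
    unfolding g_def D_def by (rule DERIV_add[OF v_has_derivative[OF j y ts(1)]])
  then have "D + c * K \<le> 0"
    by (rule deriv_nonpos_at_first_zero[where f="g j y", OF _ ts(1) zero])
      (use before[OF j y] in auto)
  with D_pos show False by linarith
qed

definition forcing :: "nat \<Rightarrow> real^'n \<Rightarrow> real \<Rightarrow> real" where
  "forcing i x t = d i * integral \<Omega> (\<lambda>y. J i x y * v i y t) + (\<Sum>k\<in>{1..m}-{i}. l i k x t * v k x t)"

lemma dispersal_nonneg:
  assumes i: "i \<in> {1..m}" and t: "t \<ge> 0"
  shows "integral \<Omega> (\<lambda>y. J i x y * v i y t) \<ge> 0"
proof (rule integral_nonneg[OF dispersal_integrable[OF i t]])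
  fix y assume "y \<in> \<Omega>"
  then have "y \<in> closure \<Omega>" using closure_subset by blast
  then show "0 \<le> J i x y * v i y t"
    by (rule mult_nonneg_nonneg[OF J_nonneg[OF i] v_nonneg[OF i _ t]])
qed

lemma coupling_nonneg:
  assumes i: "i \<in> {1..m}" and x: "x \<in> closure \<Omega>" and t: "t \<ge> 0"
  shows "(\<Sum>k\<in>{1..m}-{i}. l i k x t * v k x t) \<ge> 0"
proof (rule sum_nonneg)
  fix k assume "k \<in> {1..m} - {i}"
  then have k: "k \<in> {1..m}" "i \<noteq> k" by auto
  show "0 \<le> l i k x t * v k x t"
    by (rule mult_nonneg_nonneg[OF cooperative[OF i k x] v_nonneg[OF k(1) x t]])
qed

lemma forcing_nonneg:
  assumes i: "i \<in> {1..m}" and x: "x \<in> closure \<Omega>" and t: "t \<ge> 0"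
  shows "forcing i x t \<ge> 0"
  using mult_nonneg_nonneg[OF less_imp_le[OF d_pos[OF i]] dispersal_nonneg[OF i t, of x]]
    coupling_nonneg[OF i x t]
  unfolding forcing_def by linarith

lemma exp_weighted_has_derivative:
  assumes i: "i \<in> {1..m}" and x: "x \<in> closure \<Omega>" and r: "0 < r"
  shows "((\<lambda>t. exp (L * t) * v i x t) has_real_derivative
           exp (L * r) * ((L + l i i x r) * v i x r + forcing i x r)) (at r)"
proof -
  have "((\<lambda>t. exp (L * t)) has_real_derivative exp (L * r) * L) (at r)"
    by (auto intro!: derivative_eq_intros)
  from DERIV_mult'[OF this v_has_derivative[OF i x r]]
  have "((\<lambda>t. exp (L * t) * v i x t) has_real_derivative
      exp (L * r) * (d i * integral \<Omega> (\<lambda>y. J i x y * v i y r) + (\<Sum>k=1..m. l i k x r * v k x r))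
      + exp (L * r) * L * v i x r) (at r)" .
  moreover have "(\<Sum>k=1..m. l i k x r * v k x r)
      = l i i x r * v i x r + (\<Sum>k\<in>{1..m}-{i}. l i k x r * v k x r)"
    using i by (simp add: sum.remove)
  ultimately show ?thesis by (simp add: forcing_def algebra_simps)
qed

lemma exp_weighted_derivative_ge_forcing:
  assumes i: "i \<in> {1..m}" and x: "x \<in> closure \<Omega>" and r: "0 \<le> r" and L: "\<bar>l i i x r\<bar> \<le> L"
  shows "exp (L * r) * forcing i x r \<le> exp (L * r) * ((L + l i i x r) * v i x r + forcing i x r)"
proof -
  have "0 \<le> L + l i i x r" using L by (auto simp: abs_le_iff)
  then have "0 \<le> (L + l i i x r) * v i x r" using v_nonneg[OF i x r] by simp
  then show ?thesis by (simp add: mult_left_mono)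
qed

lemma exp_weighted_mono:
  assumes i: "i \<in> {1..m}" and x: "x \<in> closure \<Omega>" and L: "\<And>s. s \<in> {0..b} \<Longrightarrow> \<bar>l i i x s\<bar> \<le> L"
    and pq: "0 \<le> p" "p \<le> q" "q \<le> b"
  shows "exp (L * p) * v i x p \<le> exp (L * q) * v i x q"
proof (rule DERIV_nonneg_imp_increasing_open[OF pq(2)])
  fix r assume "p < r" "r < q"
  then have r: "0 < r" "r \<in> {0..b}" using pq by auto
  have "0 \<le> exp (L * r) * forcing i x r"
    using forcing_nonneg[OF i x less_imp_le[OF r(1)]] by simp
  then show "\<exists>D. ((\<lambda>t. exp (L * t) * v i x t) has_real_derivative D) (at r) \<and> 0 \<le> D"
    using exp_weighted_has_derivative[OF i x r(1)]
      exp_weighted_derivative_ge_forcing[OF i x less_imp_le[OF r(1)] L[OF r(2)]]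
    by (meson order_trans)
next
  have "continuous_on {p..q} (v i x)"
    by (rule continuous_on_subset[OF v_continuous_in_time[OF i x]]) (use pq in auto)
  then show "continuous_on {p..q} (\<lambda>t. exp (L * t) * v i x t)" by (intro continuous_intros)
qed

lemma positivity_persists:
  assumes i: "i \<in> {1..m}" and x: "x \<in> closure \<Omega>" and ab: "0 \<le> a" "a \<le> b" and pos: "v i x a > 0"
  shows "v i x b > 0"
proof -
  obtain L where L: "\<And>s. s \<in> {0..b} \<Longrightarrow> \<bar>l i i x s\<bar> \<le> L"
    using l_bounded[where b=b] i x by metis
  have "0 < exp (L * a) * v i x a" using pos by simp
  also have "\<dots> \<le> exp (L * b) * v i x b" by (rule exp_weighted_mono[OF i x L ab order.refl])
  finally show ?thesis by (simp add: zero_less_mult_iff)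
qed

lemma positive_after_forcing:
  assumes i: "i \<in> {1..m}" and x: "x \<in> closure \<Omega>" and r: "0 < r" "r < t"
    and forced: "forcing i x r > 0"
  shows "v i x t > 0"
proof -
  obtain L where L: "\<And>s. s \<in> {0..t} \<Longrightarrow> \<bar>l i i x s\<bar> \<le> L"
    using l_bounded[where b=t] i x by metis
  define h where "h = (\<lambda>s. exp (L * s) * v i x s)"
  define D where "D = exp (L * r) * ((L + l i i x r) * v i x r + forcing i x r)"
  have "0 < exp (L * r) * forcing i x r" using forced by simp
  also have "\<dots> \<le> D"
    unfolding D_def using exp_weighted_derivative_ge_forcing[OF i x _ L] r by simp
  finally have "D > 0" .
  then obtain \<delta> where \<delta>: "\<delta> > 0" "\<And>e. 0 < e \<Longrightarrow> e < \<delta> \<Longrightarrow> h r < h (r + e)"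
    using DERIV_pos_inc_right[OF exp_weighted_has_derivative[OF i x r(1), of L, folded h_def D_def]]
    by blast
  define e where "e = min (\<delta> / 2) ((t - r) / 2)"
  have e: "0 < e" "e < \<delta>" "r + e \<le> t" using \<delta>(1) r by (auto simp: e_def min_def field_simps)
  have "0 \<le> h r" using v_nonneg[OF i x] r by (simp add: h_def)
  also have "h r < h (r + e)" using \<delta>(2)[OF e(1,2)] .
  also have "h (r + e) \<le> h t"
    unfolding h_def by (rule exp_weighted_mono[OF i x L]) (use e r in auto)
  finally show ?thesis by (simp add: h_def zero_less_mult_iff)
qed

lemma positive_via_dispersal:
  assumes i: "i \<in> {1..m}" and x: "x \<in> closure \<Omega>" and y: "y \<in> \<Omega>"
    and J_pos: "J i x y > 0" and v_pos: "v i y r > 0" and r: "0 < r" "r < t"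
  shows "v i x t > 0"
proof (rule positive_after_forcing[OF i x r])
  have integral_pos: "integral \<Omega> (\<lambda>z. J i x z * v i z r) > 0"
  proof (rule integral_pos_if_pos_at_interior_point[OF open_domain bounded_domain _ _ y])
    show "continuous_on (closure \<Omega>) (\<lambda>z. J i x z * v i z r)"
      using i r by (intro continuous_on_mult J_continuous_in_space v_continuous_in_space) auto
    show "0 \<le> J i x z * v i z r" if "z \<in> \<Omega>" for z
      using that closure_subset
      by (intro mult_nonneg_nonneg J_nonneg[OF i] v_nonneg[OF i]) (use r in auto)
    show "0 < J i x y * v i y r" using J_pos v_pos by simp
  qed
  show "forcing i x r > 0"
    using mult_pos_pos[OF d_pos[OF i] integral_pos] coupling_nonneg[OF i x less_imp_le[OF r(1)]]
    unfolding forcing_def by linarith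
qed

lemma positive_via_coupling:
  assumes i: "i \<in> {1..m}" and k: "k \<in> {1..m}" "k \<noteq> i" and x: "x \<in> closure \<Omega>"
    and l_pos: "l i k x r > 0" and v_pos: "v k x r > 0" and r: "0 < r" "r < t"
  shows "v i x t > 0"
proof (rule positive_after_forcing[OF i x r])
  have coupling_pos: "(\<Sum>k\<in>{1..m}-{i}. l i k x r * v k x r) > 0"
  proof (rule sum_pos2[where i=k])
    show "0 \<le> l i j x r * v j x r" if "j \<in> {1..m} - {i}" for j
      using that cooperative[OF i _ _ x] v_nonneg[OF _ x] r by (auto intro!: mult_nonneg_nonneg)
  qed (use k l_pos v_pos in auto)
  show "forcing i x r > 0"
    using coupling_pos mult_nonneg_nonneg[OF less_imp_le[OF d_pos[OF i]]
        dispersal_nonneg[OF i less_imp_le[OF r(1)], of x]]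
    unfolding forcing_def by linarith
qed

definition positive_species :: "real \<Rightarrow> nat set" where
  "positive_species t = {i \<in> {1..m}. \<forall>x\<in>closure \<Omega>. v i x t > 0}"

definition positive_after :: "nat \<Rightarrow> real \<Rightarrow> (real^'n) set" where
  "positive_after i r = {w \<in> \<Omega>. \<forall>s>r. v i w s > 0}"

lemma positive_species_subset: "positive_species t \<subseteq> {1..m}"
  by (auto simp: positive_species_def)

lemma positive_species_mono:
  assumes "0 \<le> s" "s \<le> t"
  shows "positive_species s \<subseteq> positive_species t"
  using positivity_persists assms by (auto simp: positive_species_def)

end

locale connected_coop_nonlocal_system = coop_nonlocal_system +
  assumes connected_domain: "connected \<Omega>"
    and J_diag: "\<And>i x. i \<in> {1..m} \<Longrightarrow> J i x x > 0"
begin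

lemma positive_on_closure_positive_after:
  assumes i: "i \<in> {1..m}" and r: "r \<ge> 0" and w: "w \<in> closure \<Omega>" "w \<in> closure (positive_after i r)"
    and s: "s > r"
  shows "v i w s > 0"
proof -
  obtain e where e: "e > 0" "\<And>x y. dist x w < e \<Longrightarrow> dist y w < e \<Longrightarrow> J i x y > 0"
    using continuous_pos_near_diagonal[OF J_cont[OF i] J_diag[OF i]] by blast
  obtain u where "u \<in> positive_after i r" "dist u w < e"
    using w(2) e(1) closure_approachable by blast
  then have "u \<in> \<Omega>" "J i w u > 0" "v i u ((r + s) / 2) > 0"
    using e s by (auto simp: positive_after_def)
  then show ?thesis using positive_via_dispersal[OF i w(1)] r s by (auto simp: field_simps)
qed

lemma open_positive_after:
  assumes i: "i \<in> {1..m}" and r: "r \<ge> 0"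
  shows "open (positive_after i r)"
  unfolding open_contains_ball
proof
  fix w assume w: "w \<in> positive_after i r"
  then have "w \<in> \<Omega>" by (simp add: positive_after_def)
  obtain e1 where e1: "e1 > 0" "\<And>x y. dist x w < e1 \<Longrightarrow> dist y w < e1 \<Longrightarrow> J i x y > 0"
    using continuous_pos_near_diagonal[OF J_cont[OF i] J_diag[OF i]] by blast
  obtain e2 where e2: "e2 > 0" "ball w e2 \<subseteq> \<Omega>"
    using open_domain \<open>w \<in> \<Omega>\<close> open_contains_ball by blast
  have "x \<in> positive_after i r" if x: "x \<in> ball w (min e1 e2)" for x
  proof -
    have "x \<in> \<Omega>" "J i x w > 0" using x e1 e2(2) by (auto simp: dist_commute)
    moreover have "v i x s > 0" if "s > r" for s
    proof (rule positive_via_dispersal[OF i _ \<open>w \<in> \<Omega>\<close> \<open>J i x w > 0\<close>])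
      show "v i w ((r + s) / 2) > 0" using w that by (simp add: positive_after_def)
    qed (use \<open>x \<in> \<Omega>\<close> closure_subset r that in auto)
    ultimately show ?thesis by (simp add: positive_after_def)
  qed
  then show "\<exists>e>0. ball w e \<subseteq> positive_after i r"
    using e1(1) e2(1) by (intro exI[of _ "min e1 e2"]) auto
qed

lemma positive_after_dense:
  assumes i: "i \<in> {1..m}" and r: "r \<ge> 0" and ne: "positive_after i r \<noteq> {}"
  shows "\<Omega> \<subseteq> closure (positive_after i r)"
proof -
  let ?W = "positive_after i r"
  have "?W \<inter> \<Omega> = {} \<or> (\<Omega> - closure ?W) \<inter> \<Omega> = {}"
  proof (rule connectedD[OF connected_domain open_positive_after[OF i r]])
    show "open (\<Omega> - closure ?W)" using open_domain by (simp add: open_Diff)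
    show "?W \<inter> (\<Omega> - closure ?W) \<inter> \<Omega> = {}" using closure_subset by blast
    have "w \<in> ?W" if "w \<in> \<Omega>" "w \<in> closure ?W" for w
      using positive_on_closure_positive_after[OF i r _ that(2)] that(1) closure_subset
      by (auto simp: positive_after_def)
    then show "\<Omega> \<subseteq> ?W \<union> (\<Omega> - closure ?W)" by blast
  qed
  moreover have "?W \<inter> \<Omega> \<noteq> {}" using ne by (auto simp: positive_after_def)
  ultimately show ?thesis by blast
qed

lemma positive_spreads:
  assumes i: "i \<in> {1..m}" and y: "y \<in> closure \<Omega>" and r: "r \<ge> 0" and pos: "v i y r > 0"
    and x: "x \<in> closure \<Omega>" and t: "r < t"
  shows "v i x t > 0"
proof -
  obtain \<delta> where \<delta>: "\<delta> > 0"
    "\<And>z. z \<in> closure \<Omega> \<Longrightarrow> dist z y < \<delta> \<Longrightarrow> dist (v i z r) (v i y r) < v i y r"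
    using v_continuous_in_space[OF i r] y pos unfolding continuous_on_iff by blast
  obtain y' where y': "y' \<in> \<Omega>" "dist y' y < \<delta>" using y \<delta>(1) closure_approachable by blast
  then have "v i y' r > 0" using \<delta>(2)[of y'] closure_subset by (force simp: dist_real_def)
  then have "y' \<in> positive_after i r"
    using positivity_persists[OF i _ r] y'(1) closure_subset by (force simp: positive_after_def)
  then have "closure \<Omega> \<subseteq> closure (positive_after i r)"
    using positive_after_dense[OF i r] closure_minimal by blast
  then show ?thesis using positive_on_closure_positive_after[OF i r x] x t by blast
qed

end

locale periodic_irreducible_system = connected_coop_nonlocal_system +
  fixes T :: real
  assumes T_pos: "T > 0"
    and l_periodic: "\<And>i k x t. i \<in> {1..m} \<Longrightarrow> k \<in> {1..m} \<Longrightarrow> x \<in> closure \<Omega> \<Longrightarrow>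
                   l i k x (t + T) = l i k x t"
    and irreducible: "irreducible_mat m (\<lambda>i k. avg_coeff \<Omega> T (l i k))"
    and u0_nonzero: "\<exists>i\<in>{1..m}. \<exists>x\<in>closure \<Omega>. u0 i x \<noteq> 0"
begin

lemma l_shift_periods:
  assumes "i \<in> {1..m}" "k \<in> {1..m}" "x \<in> closure \<Omega>"
  shows "l i k x (\<tau> + of_int j * T) = l i k x \<tau>"
proof -
  interpret periodic_fun_simple "l i k x" T
    by standard (rule l_periodic[OF assms])
  show ?thesis by (rule plus_of_int)
qed

lemma positive_species_nonempty:
  assumes "t > 0"
  shows "positive_species t \<noteq> {}"
proof -
  obtain i x where i: "i \<in> {1..m}" and x: "x \<in> closure \<Omega>" and "u0 i x \<noteq> 0"
    using u0_nonzero by blast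
  then have "v i x 0 > 0" using u0_nonneg[OF i x] v_initial[OF i x] by simp
  then have "i \<in> positive_species t"
    using positive_spreads[OF i x order.refl] assms i by (simp add: positive_species_def)
  then show ?thesis by blast
qed

lemma positive_species_grows:
  assumes t0: "t0 \<ge> 0" and ne: "positive_species t0 \<noteq> {}" and proper: "positive_species t0 \<noteq> {1..m}"
    and t: "t0 + T < t"
  shows "positive_species t0 \<subset> positive_species t"
proof -
  obtain i k where i: "i \<in> {1..m} - positive_species t0" and k: "k \<in> positive_species t0"
    and avg: "avg_coeff \<Omega> T (l i k) \<noteq> 0"
    using irreducible_mat_crossing[OF irreducible positive_species_subset ne proper] by blast
  have i1: "i \<in> {1..m}" and k1: "k \<in> {1..m}" and ik: "i \<noteq> k"
    using i k positive_species_subset[of t0] by auto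
  obtain x \<tau> where x: "x \<in> \<Omega>" and "\<tau> \<in> {0..T}" and l_nz: "l i k x \<tau> \<noteq> 0"
    using avg_coeff_nonzero_obtains_point[OF avg] by blast
  have xc: "x \<in> closure \<Omega>" using x closure_subset by blast
  obtain j where j: "t0 < \<tau> + of_int j * T" "\<tau> + of_int j * T \<le> t0 + T"
    using period_shift_into_interval[OF T_pos] by blast
  define r where "r = \<tau> + of_int j * T"
  have "l i k x r > 0"
    using cooperative[OF i1 k1 ik xc, of \<tau>] l_nz l_shift_periods[OF i1 k1 xc] by (simp add: r_def)
  moreover have "v k x r > 0"
    using k positivity_persists[OF k1 xc t0] j xc by (auto simp: positive_species_def r_def)
  moreover have "t0 < r" "r \<le> t0 + T" using j by (simp_all add: r_def)
  then have r: "0 < r" "r < (r + t) / 2" "(r + t) / 2 < t" using t0 t by auto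
  ultimately have v_mid: "v i x ((r + t) / 2) > 0"
    by (intro positive_via_coupling[OF i1 k1 ik[symmetric] xc])
  have "v i z t > 0" if "z \<in> closure \<Omega>" for z
    by (rule positive_spreads[OF i1 xc _ v_mid that r(3)]) (use r in simp)
  then have "i \<in> positive_species t" using i1 by (simp add: positive_species_def)
  moreover have "positive_species t0 \<subseteq> positive_species t"
    using positive_species_mono t0 t T_pos by simp
  ultimately show ?thesis using i by blast
qed

lemma card_positive_species:
  assumes "t > real j * T"
  shows "min (j + 1) m \<le> card (positive_species t)"
  using assms
proof (induction j arbitrary: t)
  case 0
  then have "positive_species t \<noteq> {}" using positive_species_nonempty by simp
  then have "0 < card (positive_species t)"
    using finite_subset[OF positive_species_subset finite_atLeastAtMost]
    by (simp add: card_gt_0_iff)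
  then show ?case by simp
next
  case (Suc j)
  define s where "s = real j * T"
  define t0 where "t0 = (s + (t - T)) / 2"
  have "s + T < t" using Suc.prems by (simp add: s_def algebra_simps)
  then have t0_lower: "s < t0" and t0_upper: "t0 + T < t" by (simp_all add: t0_def field_simps)
  have "0 \<le> s" using T_pos by (simp add: s_def)
  then have "0 < t0" using t0_lower by linarith
  have fin: "finite (positive_species t)"
    using finite_subset[OF positive_species_subset finite_atLeastAtMost] .
  have IH: "min (j + 1) m \<le> card (positive_species t0)" using Suc.IH[OF t0_lower[unfolded s_def]] .
  show ?case
  proof (cases "positive_species t0 = {1..m}")
    case True
    then have "positive_species t = {1..m}"
      using positive_species_mono[OF less_imp_le[OF \<open>0 < t0\<close>], of t] t0_upper T_pos
        positive_species_subset
      by auto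
    then show ?thesis by simp
  next
    case False
    have "positive_species t0 \<noteq> {}" using positive_species_nonempty[OF \<open>0 < t0\<close>] .
    then have "positive_species t0 \<subset> positive_species t"
      using positive_species_grows[OF less_imp_le[OF \<open>0 < t0\<close>] _ False t0_upper] by blast
    then have "card (positive_species t0) < card (positive_species t)"
      using psubset_card_mono[OF fin] by blast
    then show ?thesis using IH by simp
  qed
qed

lemma all_species_positive:
  assumes "t > real (m - 1) * T"
  shows "positive_species t = {1..m}"
proof (rule card_seteq[OF finite_atLeastAtMost positive_species_subset])
  have "min (m - 1 + 1) m \<le> card (positive_species t)"
    using card_positive_species[OF assms] .
  then show "card {1..m} \<le> card (positive_species t)" by simp
qed

end

theorem lemma2p5:
  fixes \<Omega> :: "(real^'n) set"
    and m :: nat and T :: real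
    and d :: "nat \<Rightarrow> real"
    and J :: "nat \<Rightarrow> real^'n \<Rightarrow> real^'n \<Rightarrow> real"
    and l :: "nat \<Rightarrow> nat \<Rightarrow> real^'n \<Rightarrow> real \<Rightarrow> real"
    and u0 :: "nat \<Rightarrow> real^'n \<Rightarrow> real"
    and v :: "nat \<Rightarrow> real^'n \<Rightarrow> real \<Rightarrow> real"
    and n :: nat
  assumes \<Omega>_open: "open \<Omega>" and \<Omega>_conn: "connected \<Omega>" and \<Omega>_ne: "\<Omega> \<noteq> {}"
    and \<Omega>_bdd: "bounded \<Omega>"
    and T_pos: "T > 0" and m_pos: "m \<ge> 1"
    and d_pos: "\<And>i. i \<in> {1..m} \<Longrightarrow> d i > 0"
    and J_cont: "\<And>i. i \<in> {1..m} \<Longrightarrow> continuous_on UNIV (\<lambda>(x, y). J i x y)"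
    and J_nonneg: "\<And>i x y. i \<in> {1..m} \<Longrightarrow> J i x y \<ge> 0"
    and J_diag: "\<And>i x. i \<in> {1..m} \<Longrightarrow> J i x x > 0"
    and J_int: "\<And>i x. i \<in> {1..m} \<Longrightarrow> (J i x has_integral 1) UNIV"
    and l_cont: "\<And>i k. i \<in> {1..m} \<Longrightarrow> k \<in> {1..m} \<Longrightarrow>
                   continuous_on (closure \<Omega> \<times> UNIV) (\<lambda>(x, t). l i k x t)"
    and l_per: "\<And>i k x t. i \<in> {1..m} \<Longrightarrow> k \<in> {1..m} \<Longrightarrow> x \<in> closure \<Omega> \<Longrightarrow>
                   l i k x (t + T) = l i k x t"
    and L1: "\<And>i k x t. i \<in> {1..m} \<Longrightarrow> k \<in> {1..m} \<Longrightarrow> i \<noteq> k \<Longrightarrow>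
                   x \<in> closure \<Omega> \<Longrightarrow> l i k x t \<ge> 0"
    and L2: "irreducible_mat m (\<lambda>i k. avg_coeff \<Omega> T (l i k))"
    and u0_cont: "\<And>i. i \<in> {1..m} \<Longrightarrow> continuous_on (closure \<Omega>) (u0 i)"
    and u0_nonneg: "\<And>i x. i \<in> {1..m} \<Longrightarrow> x \<in> closure \<Omega> \<Longrightarrow> u0 i x \<ge> 0"
    and u0_nz: "\<exists>i\<in>{1..m}. \<exists>x\<in>closure \<Omega>. u0 i x \<noteq> 0"
    and sol: "is_solution \<Omega> m d J l 0 u0 v"
    and n_gt: "n > m"
  shows "\<forall>i\<in>{1..m}. \<forall>x\<in>closure \<Omega>. v i x (real n * T) > 0"
proof -
  interpret periodic_irreducible_system \<Omega> m d J l u0 v T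
    by unfold_locales (use assms in auto)
  have "real (m - 1) * T < real n * T" using n_gt T_pos by (intro mult_strict_right_mono) auto
  then show ?thesis
    using all_species_positive by (auto simp: positive_species_def)
qed

end
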